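(* Let $A, N_1,\dots,N_m\in\mathbb R^{n\times n}$, $u=(u_1,\dots,u_m)^T\in L^2$, $s\ge 0$ and $x_0\in\mathbb R^n$. Let $x(t)$, $t\ge s$, denote the solution to the homogeneous bilinear equation $$\dot x(t)=Ax(t)+\sum_{k=1}^m N_k x(t)u_k(t),\qquad x(s)=x_0.$$ Then $X(t):=x(t)x^T(t)$, $t\ge s$, satisfies $X(s)=x_0x_0^T$ and the matrix differential inequality $$\dot X(t)\le AX(t)+X(t)A^T+\sum_{k=1}^m N_kX(t)N_k^T+X(t)\|u^0(t)\|_2^2 .$$
   Context: For symmetric matrices $K,L$, $K\le L$ means $L-K$ is symmetric positive semidefinite. $L^2$ is the set of $u:[0,\infty)\to\mathbb R^m$ with $\int_0^\infty u^T(s)u(s)\,ds<\infty$. The vector $u^0=(u^0_1,\dots,u^0_m)^T$ is defined by $u^0_k\equiv 0$ if $N_k=0$ and $u^0_k=u_k$ otherwise. *)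

theory Defs
  imports "HOL-Analysis.Analysis"
begin

definition psd_le :: "real^'n^'n \<Rightarrow> real^'n^'n \<Rightarrow> bool" where
  "psd_le K L \<longleftrightarrow> transpose K = K \<and> transpose L = L \<and>
     (\<forall>v::real^'n. 0 \<le> v \<bullet> ((L - K) *v v))"

definition outer :: "real^'n \<Rightarrow> real^'n \<Rightarrow> real^'n^'n" where
  "outer x y = (\<chi> i j. x $ i * y $ j)"

definition in_L2 :: "nat \<Rightarrow> (real \<Rightarrow> nat \<Rightarrow> real) \<Rightarrow> bool" where
  "in_L2 m u \<longleftrightarrow> (\<forall>k\<in>{1..m}. set_borel_measurable lborel {0..} (\<lambda>t. u t k)) \<and>
     set_integrable lborel {0..} (\<lambda>t. \<Sum>k\<in>{1..m}. (u t k)\<^sup>2)"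

text \<open>Squared Euclidean norm of u^0(t), where u^0_k = 0 if N_k = 0 and u^0_k = u_k otherwise.\<close>
definition u0_norm2 :: "nat \<Rightarrow> (nat \<Rightarrow> real^'n^'n) \<Rightarrow> (real \<Rightarrow> nat \<Rightarrow> real) \<Rightarrow> real \<Rightarrow> real" where
  "u0_norm2 m N u t = (\<Sum>k\<in>{1..m}. if N k = 0 then 0 else (u t k)\<^sup>2)"

text \<open>Solution (Caratheodory sense) of x' = A x + sum_k N_k x u_k, x(s) = x0, on [s,\<infinity>):
  continuous on [s,\<infinity>), initial value x0, and the ODE holds at almost every t > s.\<close>
definition bilinear_solution ::
  "real^'n^'n \<Rightarrow> nat \<Rightarrow> (nat \<Rightarrow> real^'n^'n) \<Rightarrow> (real \<Rightarrow> nat \<Rightarrow> real) \<Rightarrow> real \<Rightarrow> real^'n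
     \<Rightarrow> (real \<Rightarrow> real^'n) \<Rightarrow> bool" where
  "bilinear_solution A m N u s x0 x \<longleftrightarrow>
     continuous_on {s..} x \<and> x s = x0 \<and>
     (AE t in lborel. s < t \<longrightarrow>
        (x has_vector_derivative (A *v x t + (\<Sum>k\<in>{1..m}. u t k *\<^sub>R (N k *v x t)))) (at t))"

end

theory Submission
  imports Defs
begin

(* Along a solution, X = x x^T has derivative v x^T + x v^T with v = A x + sum_k u_k N_k x.
   Tested against w, the gap to the right-hand side is
   sum over k with N_k \<noteq> 0 of (w \<bullet> N_k x - u_k (w \<bullet> x))^2, a sum of squares; terms with
   N_k = 0 vanish identically, which is why u^0 suffices.  The estimate holds at every t
   where the equation does. *)

lemma outer_add_left: "outer (a + b) c = outer a c + outer b c"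
  by (simp add: outer_def vec_eq_iff algebra_simps)

lemma outer_add_right: "outer c (a + b) = outer c a + outer c b"
  by (simp add: outer_def vec_eq_iff algebra_simps)

lemma outer_scaleR_left: "outer (r *\<^sub>R a) c = r *\<^sub>R outer a c"
  by (simp add: outer_def vec_eq_iff)

lemma outer_scaleR_right: "outer c (r *\<^sub>R a) = r *\<^sub>R outer c a"
  by (simp add: outer_def vec_eq_iff algebra_simps)

lemma transpose_outer: "transpose (outer a b) = outer b a"
  by (simp add: outer_def vec_eq_iff transpose_def)

lemma matrix_mul_outer: "B ** outer a b = outer (B *v a) b"
  by (simp add: outer_def vec_eq_iff matrix_matrix_mult_def matrix_vector_mult_def
      sum_distrib_right mult.assoc)

lemma outer_matrix_mul_transpose: "outer a b ** transpose B = outer a (B *v b)"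
  by (simp add: outer_def vec_eq_iff matrix_matrix_mult_def matrix_vector_mult_def
      transpose_def sum_distrib_left mult_ac)

lemma outer_mult_vec: "outer a b *v w = (b \<bullet> w) *\<^sub>R a"
  by (simp add: outer_def matrix_vector_mult_def inner_vec_def vec_eq_iff
      sum_distrib_left mult_ac)

lemma inner_outer_mult_vec: "w \<bullet> (outer a b *v w) = (w \<bullet> a) * (w \<bullet> b)"
  by (simp add: outer_mult_vec inner_commute)

lemma bounded_bilinear_outer: "bounded_bilinear outer"
  by (rule bilinear_conv_bounded_bilinear[THEN iffD1])
     (auto intro!: linearI simp: bilinear_def outer_add_left outer_add_right
       outer_scaleR_left outer_scaleR_right)

lemma has_vector_derivative_outer_self:
  assumes "(x has_vector_derivative v) (at t)"
  shows "((\<lambda>t. outer (x t) (x t)) has_vector_derivative outer v (x t) + outer (x t) v) (at t)"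
  using bounded_bilinear.has_vector_derivative[OF bounded_bilinear_outer assms assms]
  by (simp add: add.commute)

lemma linear_quadratic_form: "linear (\<lambda>M::real^'n^'n. w \<bullet> (M *v w))"
proof (rule linearI)
  show "w \<bullet> ((M + M') *v w) = w \<bullet> (M *v w) + w \<bullet> (M' *v w)" for M M' :: "real^'n^'n"
    by (simp add: matrix_vector_mult_add_rdistrib inner_add_right)
  show "w \<bullet> ((r *\<^sub>R M) *v w) = r *\<^sub>R (w \<bullet> (M *v w))" for r and M :: "real^'n^'n"
    by (simp add: inner_vec_def matrix_vector_mult_def sum_distrib_left mult_ac)
qed

lemma linear_transpose: "linear (transpose :: real^'n^'m \<Rightarrow> real^'m^'n)"
  by (auto intro!: linearI simp: transpose_def vec_eq_iff)

lemma psd_le_outer_derivative: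
  fixes A :: "real^'n^'n" and N :: "'k \<Rightarrow> real^'n^'n" and c :: "'k \<Rightarrow> real" and y :: "real^'n"
  assumes "finite K"
  defines "v \<equiv> A *v y + (\<Sum>k\<in>K. c k *\<^sub>R (N k *v y))"
  shows "psd_le (outer v y + outer y v)
           (A ** outer y y + outer y y ** transpose A
            + (\<Sum>k\<in>K. N k ** outer y y ** transpose (N k))
            + (\<Sum>k\<in>K. if N k = 0 then 0 else (c k)\<^sup>2) *\<^sub>R outer y y)"
    (is "psd_le ?D ?R")
proof -
  have R_eq: "?R = outer (A *v y) y + outer y (A *v y) + (\<Sum>k\<in>K. outer (N k *v y) (N k *v y))
                   + (\<Sum>k\<in>K. if N k = 0 then 0 else (c k)\<^sup>2) *\<^sub>R outer y y"
    by (simp add: matrix_mul_outer outer_matrix_mul_transpose matrix_mul_assoc[symmetric])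
  have "0 \<le> w \<bullet> ((?R - ?D) *v w)" for w
  proof -
    define a where "a k = w \<bullet> (N k *v y)" for k
    define b where "b = w \<bullet> y"
    note q = linear_diff[OF linear_quadratic_form] linear_add[OF linear_quadratic_form]
      linear_scale[OF linear_quadratic_form] linear_sum[OF linear_quadratic_form]
    have "w \<bullet> ((?R - ?D) *v w)
          = (\<Sum>k\<in>K. (a k)\<^sup>2 - 2 * c k * a k * b + (if N k = 0 then 0 else (c k)\<^sup>2) * b\<^sup>2)"
      unfolding R_eq v_def
      by (simp add: q inner_outer_mult_vec assms a_def b_def inner_add_right inner_sum_right
          sum.distrib sum_subtractf sum_distrib_left sum_distrib_right algebra_simps
          power2_eq_square inner_commute)
    also have "\<dots> = (\<Sum>k\<in>K. if N k = 0 then 0 else (a k - c k * b)\<^sup>2)"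
      by (rule sum.cong) (auto simp: a_def power2_eq_square algebra_simps)
    finally have "w \<bullet> ((?R - ?D) *v w) = (\<Sum>k\<in>K. if N k = 0 then 0 else (a k - c k * b)\<^sup>2)" .
    then show ?thesis by (simp add: sum_nonneg)
  qed
  moreover have "transpose ?D = ?D" "transpose ?R = ?R"
    unfolding R_eq
    by (simp_all add: transpose_outer linear_add[OF linear_transpose]
        linear_scale[OF linear_transpose] linear_sum[OF linear_transpose] add.commute)
  ultimately show ?thesis
    unfolding psd_le_def by blast
qed

lemma outer_self_has_derivative_psd_le:
  fixes A :: "real^'n^'n" and N :: "'k \<Rightarrow> real^'n^'n" and c :: "'k \<Rightarrow> real"
  assumes "finite K"
    and "(x has_vector_derivative A *v x t + (\<Sum>k\<in>K. c k *\<^sub>R (N k *v x t))) (at t)"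
  shows "\<exists>D. ((\<lambda>t. outer (x t) (x t)) has_vector_derivative D) (at t) \<and>
    psd_le D (A ** outer (x t) (x t) + outer (x t) (x t) ** transpose A
            + (\<Sum>k\<in>K. N k ** outer (x t) (x t) ** transpose (N k))
            + (\<Sum>k\<in>K. if N k = 0 then 0 else (c k)\<^sup>2) *\<^sub>R outer (x t) (x t))"
  using has_vector_derivative_outer_self[OF assms(2)] psd_le_outer_derivative[OF assms(1)]
  by blast

theorem lemma2p2:
  fixes A :: "real^'n^'n" and N :: "nat \<Rightarrow> real^'n^'n" and m :: nat
    and u :: "real \<Rightarrow> nat \<Rightarrow> real" and s :: real and x0 :: "real^'n"
    and x :: "real \<Rightarrow> real^'n"
  assumes "in_L2 m u" and "s \<ge> 0"
    and "bilinear_solution A m N u s x0 x"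
  defines "X \<equiv> (\<lambda>t. outer (x t) (x t))"
  shows "X s = outer x0 x0 \<and>
    (AE t in lborel. s < t \<longrightarrow>
      (\<exists>D. (X has_vector_derivative D) (at t) \<and>
        psd_le D (A ** X t + X t ** transpose A
                  + (\<Sum>k\<in>{1..m}. N k ** X t ** transpose (N k))
                  + u0_norm2 m N u t *\<^sub>R X t)))"
proof -
  have "x s = x0" and ode: "AE t in lborel. s < t \<longrightarrow>
      (x has_vector_derivative A *v x t + (\<Sum>k\<in>{1..m}. u t k *\<^sub>R (N k *v x t))) (at t)"
    using assms(3) unfolding bilinear_solution_def by auto
  show ?thesis
    unfolding X_def u0_norm2_def
    by (intro conjI, simp add: \<open>x s = x0\<close>, rule AE_mp[OF ode], intro AE_I2 impI)
      (simp add: outer_self_has_derivative_psd_le)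
qed

end
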